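(* Let $\nabla$ be a symplectic self-duality of a locally compact abelian group $L$. If $L$ has a compact open subgroup, then $L$ has a compact open subgroup $G$ with $G=\{x\in L:\nabla(x)(g)=0\ \text{for all } g\in G\}$ (i.e. a compact open maximal isotropic subgroup).
   Context: $\mathbf T=\mathbf R/\mathbf Z$; $\hat L$ is the Pontryagin dual of a locally compact abelian group $L$. A symplectic self-duality of $L$ is an isomorphism of topological groups $\nabla:L\to\hat L$ with $\nabla(x)(x)=0$ for all $x\in L$. A subgroup $N$ is isotropic if $\nabla(x)(y)=0$ for all $x,y\in N$. *)

theory Defs
  imports "HOL-Analysis.Analysis"
begin

text \<open>The circle group T = R/Z is represented (isomorphically, as a topological group)
  by the unit circle in the complex plane, written multiplicatively; the element 0 of T
  corresponds to 1.\<close>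

definition add_subgroup :: "'a::ab_group_add set \<Rightarrow> bool" where
  "add_subgroup H \<longleftrightarrow> 0 \<in> H \<and> (\<forall>x\<in>H. \<forall>y\<in>H. x + y \<in> H) \<and> (\<forall>x\<in>H. - x \<in> H)"

definition character :: "('a::{topological_space, ab_group_add} \<Rightarrow> complex) \<Rightarrow> bool" where
  "character c \<longleftrightarrow> continuous_on UNIV c \<and> (\<forall>x. norm (c x) = 1)
      \<and> (\<forall>x y. c (x + y) = c x * c y)"

definition pontryagin_dual :: "('a::{topological_space, ab_group_add} \<Rightarrow> complex) set" where
  "pontryagin_dual = {c. character c}"

definition dual_topology :: "('a::{topological_space, ab_group_add} \<Rightarrow> complex) topology" where
  "dual_topology = subtopology
      (topology_generated_by {{f. f ` K \<subseteq> U} | K U. compact K \<and> open U})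
      pontryagin_dual"

definition symplectic_self_duality :: "('a::{topological_space, ab_group_add} \<Rightarrow> 'a \<Rightarrow> complex) \<Rightarrow> bool" where
  "symplectic_self_duality nabla \<longleftrightarrow>
      homeomorphic_map euclidean dual_topology nabla
    \<and> (\<forall>x y. nabla (x + y) = (\<lambda>g. nabla x g * nabla y g))
    \<and> (\<forall>x. nabla x x = 1)"

end

theory Submission
  imports Defs
begin

text \<open>
  Start from a compact open subgroup \<open>H\<close>. Since the circle has no small subgroups, a character
  mapping the compact subgroup \<open>H\<close> into the ball of radius 1 around 1 is trivial on \<open>H\<close>; hence
  \<open>H\<^sup>\<bottom>\<close> is open and \<open>K = H \<inter> H\<^sup>\<bottom>\<close> is a compact open isotropic subgroup. By Zorn's lemma \<open>K\<close> lies
  in a maximal isotropic set \<open>M\<close>, and maximality together with the alternating property gives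
  \<open>M = M\<^sup>\<bottom>\<close>, so \<open>M\<close> is a closed subgroup; it is open because it contains \<open>K\<close>. Finally
  \<open>M \<subseteq> K\<^sup>\<bottom>\<close>, and \<open>K\<^sup>\<bottom>\<close> is compact: as \<open>\<nabla>\<close> is a homeomorphism onto the dual, characters close to 1
  on a suitable compact set \<open>C\<close> come from \<open>K\<close>; a character trivial on \<open>K\<close> is determined on \<open>C\<close>
  by its values at finitely many points, so \<open>K\<^sup>\<bottom>\<close> is covered by finitely many cosets of \<open>K\<close>.
\<close>

lemma cnj_eq_if_unimodular_mult_eq_1:
  fixes z w :: complex
  assumes "norm z = 1" "z * w = 1"
  shows "w = cnj z"
  by (metis assms divide_conv_cnj mult_cancel_right2 mult_eq_0_iff nonzero_mult_div_cancel_left)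

lemma dist_unimodular_mult:
  fixes a w :: complex
  assumes "norm w = 1"
  shows "dist (a * w) w = dist a 1"
proof -
  have "dist (a * w) w = norm ((a - 1) * w)" by (simp add: dist_norm algebra_simps)
  also have "\<dots> = dist a 1" using assms by (simp add: norm_mult dist_norm)
  finally show ?thesis .
qed

lemma norm_power2_minus_1_ge:
  fixes z :: complex
  assumes "norm z = 1" "norm (z - 1) < 1"
  shows "3/2 * norm (z - 1) \<le> norm (z^2 - 1)"
proof -
  have circle: "(Re z)^2 + (Im z)^2 = 1" using assms(1) by (metis cmod_power2 one_power2)
  have minus: "(norm (z - 1))^2 = (Re z - 1)^2 + (Im z)^2" by (simp add: cmod_power2)
  have plus: "(norm (z + 1))^2 = (Re z + 1)^2 + (Im z)^2" by (simp add: cmod_power2)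
  have "(norm (z - 1))^2 < 1" using assms(2) by (simp add: power_less_one_iff)
  then have "(3/2)^2 < (norm (z + 1))^2"
    using circle minus plus by (simp add: power2_eq_square algebra_simps)
  then have far: "3/2 \<le> norm (z + 1)"
    by (meson less_imp_le norm_ge_zero power_less_imp_less_base)
  have "z^2 - 1 = (z - 1) * (z + 1)" by (simp add: power2_eq_square algebra_simps)
  then have "norm (z^2 - 1) = norm (z - 1) * norm (z + 1)" by (simp add: norm_mult)
  then show ?thesis using mult_left_mono[OF far norm_ge_zero, of "z - 1"] by (simp add: mult.commute)
qed

lemma unit_circle_no_small_subgroups:
  fixes z :: complex
  assumes "norm z = 1" and near: "\<And>n. dist (z ^ n) 1 < 1"
  shows "z = 1"
proof (rule ccontr)
  assume "z \<noteq> 1"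
  then have pos: "norm (z - 1) > 0" by simp
  have near2: "norm (z ^ (2 ^ k) - 1) < 1" for k using near[of "2 ^ k"] by (simp add: dist_norm)
  have grow: "(3/2)^k * norm (z - 1) \<le> norm (z ^ (2 ^ k) - 1)" for k
  proof (induction k)
    case 0
    then show ?case by simp
  next
    case (Suc k)
    have "(3/2)^Suc k * norm (z - 1) \<le> 3/2 * norm (z ^ (2 ^ k) - 1)"
      using mult_left_mono[OF Suc.IH, of "3/2"] by simp
    also have "\<dots> \<le> norm ((z ^ (2 ^ k))^2 - 1)"
      by (rule norm_power2_minus_1_ge[OF _ near2]) (simp add: assms(1) norm_power)
    finally show ?case by (simp add: power_mult[symmetric] mult.commute)
  qed
  obtain k where "1 / norm (z - 1) < (3/2::real)^k"
    using real_arch_pow[of "3/2" "1 / norm (z - 1)"] by auto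
  then have "1 < (3/2)^k * norm (z - 1)" using pos by (simp add: field_simps)
  then show False using grow[of k] near2[of k] by linarith
qed

lemma character_zero:
  assumes "character c"
  shows "c 0 = 1"
proof -
  have "c 0 * c 0 = c 0" "c 0 \<noteq> 0" using assms by (auto simp: character_def dest: spec[of _ 0])
  then show ?thesis by simp
qed

lemma character_minus:
  assumes "character c"
  shows "c (- x) = cnj (c x)"
proof (rule cnj_eq_if_unimodular_mult_eq_1)
  show "norm (c x) = 1" using assms by (simp add: character_def)
  show "c x * c (- x) = 1"
    using assms character_zero[OF assms] by (metis character_def add.right_inverse)
qed

lemma character_sum:
  assumes "character c"
  shows "c (\<Sum>i\<in>I. g i) = (\<Prod>i\<in>I. c (g i))"
  by (induction I rule: infinite_finite_induct)
    (use assms character_zero[OF assms] in \<open>simp_all add: character_def\<close>)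

lemma add_subgroup_sum:
  assumes "add_subgroup H" "\<And>i. i \<in> I \<Longrightarrow> g i \<in> H"
  shows "(\<Sum>i\<in>I. g i) \<in> H"
  using assms(2)
  by (induction I rule: infinite_finite_induct) (use assms(1) in \<open>auto simp: add_subgroup_def\<close>)

lemma open_translation_group:
  fixes K :: "'a::topological_group_add set"
  assumes "open K"
  shows "open ((+) c ` K)"
proof -
  have "(+) c ` K = (\<lambda>x. - c + x) -` K"
  proof (intro set_eqI iffI)
    fix y assume "y \<in> (\<lambda>x. - c + x) -` K"
    moreover have "y = c + (- c + y)" by (simp add: add.assoc[symmetric])
    ultimately show "y \<in> (+) c ` K" by (metis image_eqI vimageD)
  qed (auto simp: add.assoc[symmetric])
  moreover have "open ((\<lambda>x. - c + x) -` K)"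
    by (rule open_vimage[OF assms continuous_on_add[OF continuous_on_const continuous_on_id]])
  ultimately show ?thesis by simp
qed

lemma subset_UN_translates:
  fixes K :: "'a::monoid_add set"
  assumes "0 \<in> K"
  shows "S \<subseteq> (\<Union>x\<in>S. (+) x ` K)"
proof
  fix x assume "x \<in> S"
  then show "x \<in> (\<Union>x\<in>S. (+) x ` K)" using assms by (intro UN_I image_eqI[of x _ 0]) simp_all
qed

lemma open_add_subgroup_if_superset_of_nbhd:
  fixes M :: "'a::{topological_group_add, ab_group_add} set"
  assumes "add_subgroup M" "open K" "0 \<in> K" "K \<subseteq> M"
  shows "open M"
proof -
  have "x + k \<in> M" if "x \<in> M" "k \<in> K" for x k
    using assms(1,4) that unfolding add_subgroup_def by blast
  then have "M = (\<Union>x\<in>M. (+) x ` K)"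
    by (intro equalityI[OF subset_UN_translates[OF assms(3)]]) auto
  moreover have "open (\<Union>x\<in>M. (+) x ` K)" using open_translation_group[OF assms(2)] by blast
  ultimately show ?thesis by simp
qed

lemma generate_topology_on_finite_Inter_nbhd:
  assumes "generate_topology_on S T" "x \<in> T"
  shows "\<exists>F. finite F \<and> F \<subseteq> S \<and> x \<in> \<Inter>F \<and> \<Inter>F \<subseteq> T"
  using assms
proof (induction arbitrary: x rule: generate_topology_on.induct)
  case Empty
  then show ?case by simp
next
  case (Int a b)
  obtain F1 where "finite F1" "F1 \<subseteq> S" "x \<in> \<Inter>F1" "\<Inter>F1 \<subseteq> a"
    using Int.IH(1)[of x] Int.prems by auto
  moreover obtain F2 where "finite F2" "F2 \<subseteq> S" "x \<in> \<Inter>F2" "\<Inter>F2 \<subseteq> b"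
    using Int.IH(2)[of x] Int.prems by auto
  ultimately have "finite (F1 \<union> F2) \<and> F1 \<union> F2 \<subseteq> S \<and> x \<in> \<Inter>(F1 \<union> F2) \<and> \<Inter>(F1 \<union> F2) \<subseteq> a \<inter> b"
    by (simp add: Inter_Un_distrib) blast
  then show ?case by blast
next
  case (UN K)
  then obtain k where k: "k \<in> K" "x \<in> k" by blast
  then obtain F where "finite F" "F \<subseteq> S" "x \<in> \<Inter>F" "\<Inter>F \<subseteq> k"
    using UN.IH[OF k] by (elim exE conjE)
  moreover have "k \<subseteq> \<Union>K" using k(1) by (rule Union_upper)
  ultimately show ?case by (meson order_trans)
next
  case (Basis s)
  then show ?case by (intro exI[of _ "{s}"]) auto
qed

lemma finite_net_pointwise:
  fixes f :: "'a \<Rightarrow> 'b \<Rightarrow> 'c::metric_space"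
  assumes "finite P" "compact Z" "e > 0" and into: "\<And>x c. x \<in> S \<Longrightarrow> c \<in> P \<Longrightarrow> f x c \<in> Z"
  obtains R where "finite R" "R \<subseteq> S" "\<And>x. x \<in> S \<Longrightarrow> \<exists>y\<in>R. \<forall>c\<in>P. dist (f x c) (f y c) < e"
proof -
  have "Z \<subseteq> (\<Union>z\<in>Z. ball z (e/2))" using \<open>e > 0\<close> by auto
  then obtain A where A: "finite A" "Z \<subseteq> (\<Union>a\<in>A. ball a (e/2))"
    by (rule compactE_image[OF \<open>compact Z\<close> open_ball]) blast
  \<comment> \<open>Points with the same label \<open>sig\<close> are \<open>e\<close>-close on \<open>P\<close>, and there are finitely many labels.\<close>
  define sig where "sig x = (\<lambda>c\<in>P. SOME a. a \<in> A \<and> f x c \<in> ball a (e/2))" for x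
  have sig: "sig x c \<in> A \<and> f x c \<in> ball (sig x c) (e/2)" if "x \<in> S" "c \<in> P" for x c
  proof -
    have "\<exists>a. a \<in> A \<and> f x c \<in> ball a (e/2)" using A(2) into[OF that] by blast
    from someI_ex[OF this] show ?thesis using that(2) by (simp add: sig_def)
  qed
  have "sig ` S \<subseteq> (\<Pi>\<^sub>E c\<in>P. A)" using sig by (auto simp: sig_def restrict_PiE_iff)
  then have fin: "finite (sig ` S)" by (rule finite_subset) (simp add: finite_PiE assms(1) A(1))
  show thesis
  proof
    show "finite (inv_into S sig ` sig ` S)" using fin by simp
    show "inv_into S sig ` sig ` S \<subseteq> S" by (auto intro: inv_into_into)
  next
    fix x assume x: "x \<in> S"
    define y where "y = inv_into S sig (sig x)"
    have y: "y \<in> S" "sig y = sig x" using x by (auto simp: y_def inv_into_into f_inv_into_f)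
    have "dist (f x c) (f y c) < e" if "c \<in> P" for c
    proof (rule dist_triangle_half_l)
      show "dist (f x c) (sig x c) < e/2" "dist (f y c) (sig x c) < e/2"
        using sig[OF x that] sig[OF y(1) that] y(2) by (auto simp: dist_commute)
    qed
    then show "\<exists>y\<in>inv_into S sig ` sig ` S. \<forall>c\<in>P. dist (f x c) (f y c) < e"
      using x by (auto simp: y_def)
  qed
qed

definition perp :: "('a \<Rightarrow> 'a \<Rightarrow> complex) \<Rightarrow> 'a set \<Rightarrow> 'a set" where
  "perp N S = {x. \<forall>g\<in>S. N x g = 1}"

definition isotropic :: "('a \<Rightarrow> 'a \<Rightarrow> complex) \<Rightarrow> 'a set \<Rightarrow> bool" where
  "isotropic N S \<longleftrightarrow> S \<subseteq> perp N S"

locale symplectic_self_dual =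
  fixes N :: "'a::{topological_group_add, ab_group_add} \<Rightarrow> 'a \<Rightarrow> complex"
  assumes symplectic: "symplectic_self_duality N"
begin

lemma homeomorphic: "homeomorphic_map euclidean dual_topology N"
  using symplectic by (simp add: symplectic_self_duality_def)

lemma character: "character (N x)"
proof -
  have "N x \<in> topspace dual_topology"
    using homeomorphic_imp_surjective_map[OF homeomorphic] by auto
  then show ?thesis by (simp add: dual_topology_def pontryagin_dual_def)
qed

lemma norm_eq_1: "norm (N x g) = 1"
  using character by (simp add: character_def)

lemma add_left: "N (x + y) g = N x g * N y g"
  using symplectic by (simp add: symplectic_self_duality_def)

lemma alternating: "N x x = 1"
  using symplectic by (simp add: symplectic_self_duality_def)

lemma swap: "N y x = cnj (N x y)"
proof (rule cnj_eq_if_unimodular_mult_eq_1[OF norm_eq_1])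
  have "N (x + y) (x + y) = N x x * N x y * (N y x * N y y)"
    using character[of "x + y"] by (simp add: character_def add_left)
  then show "N x y * N y x = 1" by (simp add: alternating)
qed

lemma open_maps_into:
  assumes "compact C" "open U"
  shows "open {x. N x ` C \<subseteq> U}"
proof -
  let ?T = "{f::'a \<Rightarrow> complex. f ` C \<subseteq> U}"
  have "openin (topology_generated_by {{f. f ` K \<subseteq> U} | K U. compact K \<and> open U}) ?T"
    by (rule topology_generated_by_Basis) (use assms in blast)
  then have "openin dual_topology (?T \<inter> pontryagin_dual)"
    unfolding dual_topology_def by (auto simp: openin_subtopology)
  then have "openin euclidean {x \<in> topspace euclidean. N x \<in> ?T \<inter> pontryagin_dual}"
    by (rule openin_continuous_map_preimage[OF homeomorphic_imp_continuous_map[OF homeomorphic]])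
  moreover have "{x \<in> topspace euclidean. N x \<in> ?T \<inter> pontryagin_dual} = {x. N x ` C \<subseteq> U}"
    using character by (auto simp: pontryagin_dual_def)
  ultimately show ?thesis by simp
qed

lemma character_left: "character (\<lambda>x. N x g)"
  unfolding character_def
proof (intro conjI allI)
  have "open ((\<lambda>x. N x g) -` U)" if "open U" for U
    using open_maps_into[OF compact_sing that, of g] by (simp add: vimage_def)
  then show "continuous_on UNIV (\<lambda>x. N x g)" by (simp add: continuous_on_open_vimage)
qed (simp_all add: norm_eq_1 add_left)

lemma add_subgroup_perp: "add_subgroup (perp N S)"
  using character_zero[OF character_left] character_minus[OF character_left]
  unfolding add_subgroup_def perp_def by (simp add: add_left)

lemma closed_perp: "closed (perp N S)"
proof -
  have "closed {x. N x g = 1}" for g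
    using character_left[of g] by (intro closed_Collect_eq) (auto simp: character_def)
  moreover have "perp N S = (\<Inter>g\<in>S. {x. N x g = 1})" by (auto simp: perp_def)
  ultimately show ?thesis by auto
qed

lemma open_perp_compact_subgroup:
  assumes "add_subgroup H" "compact H"
  shows "open (perp N H)"
proof -
  have "x \<in> perp N H" if x: "N x ` H \<subseteq> ball 1 1" for x
    unfolding perp_def
  proof (intro CollectI ballI unit_circle_no_small_subgroups[OF norm_eq_1])
    fix h and n :: nat assume "h \<in> H"
    then have "(\<Sum>i<n. h) \<in> H" by (rule add_subgroup_sum[OF assms(1)])
    then have "N x (\<Sum>i<n. h) \<in> ball 1 1" using x by blast
    then show "dist (N x h ^ n) 1 < 1"
      by (simp add: character_sum[OF character] dist_commute)
  qed
  then have "perp N H = {x. N x ` H \<subseteq> ball 1 1}" by (auto simp: perp_def)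
  then show ?thesis using open_maps_into[OF assms(2) open_ball] by simp
qed

text \<open>Continuity of the inverse of \<open>N\<close> at the trivial character, spelled out in the
  compact-open topology.\<close>

lemma near_trivial_on_compact_imp_mem:
  assumes "open K" "0 \<in> K"
  obtains C e where "compact C" "e > 0" "\<And>x. N x ` C \<subseteq> ball 1 e \<Longrightarrow> x \<in> K"
proof -
  define \<B> :: "('a \<Rightarrow> complex) set set" where
    "\<B> = {{f. f ` C \<subseteq> U} | C U. compact C \<and> open U}"
  have "openin dual_topology (N ` K)"
    using homeomorphic_map_openness[OF homeomorphic] assms(1) by simp
  then obtain T where "openin (topology_generated_by \<B>) T" and K: "N ` K = T \<inter> pontryagin_dual"
    unfolding dual_topology_def openin_subtopology \<B>_def by blast
  then have T: "generate_topology_on \<B> T" by (simp add: openin_topology_generated_by_iff)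
  have "N 0 \<in> T" using imageI[OF assms(2), of N] unfolding K by blast
  then have "\<exists>F. finite F \<and> F \<subseteq> \<B> \<and> N 0 \<in> \<Inter>F \<and> \<Inter>F \<subseteq> T"
    by (rule generate_topology_on_finite_Inter_nbhd[OF T])
  then obtain F where F: "finite F" "F \<subseteq> \<B>" "N 0 \<in> \<Inter>F" "\<Inter>F \<subseteq> T" by blast
  have "\<forall>s\<in>F. \<exists>p. s = {f. f ` fst p \<subseteq> snd p} \<and> compact (fst p) \<and> open (snd p)"
    using F(2) by (auto simp: \<B>_def)
  then obtain p where p: "\<forall>s\<in>F. s = {f. f ` fst (p s) \<subseteq> snd (p s)} \<and> compact (fst (p s)) \<and> open (snd (p s))"
    by (metis bchoice)
  \<comment> \<open>A constraint with empty compact part holds for every map, and its open part need not contain 1.\<close>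
  define V where "V = (\<Inter>s\<in>{s\<in>F. fst (p s) \<noteq> {}}. snd (p s))"
  have "1 \<in> snd (p s)" if "s \<in> F" "c \<in> fst (p s)" for s c
  proof -
    have "N 0 ` fst (p s) \<subseteq> snd (p s)" using F(3) p that(1) by blast
    then show ?thesis using that(2) character_zero[OF character_left, of c] by auto
  qed
  then have "1 \<in> V" unfolding V_def by blast
  moreover have "open V" unfolding V_def using F(1) p by (intro open_INT) auto
  ultimately obtain e where e: "e > 0" "ball 1 e \<subseteq> V" by (meson open_contains_ball_eq)
  show thesis
  proof
    show "compact (\<Union>s\<in>F. fst (p s))" using F(1) p by (intro compact_UN) auto
    fix x assume x: "N x ` (\<Union>s\<in>F. fst (p s)) \<subseteq> ball 1 e"
    have "N x ` fst (p s) \<subseteq> snd (p s)" if "s \<in> F" for s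
    proof (cases "fst (p s) = {}")
      case False
      then have "ball 1 e \<subseteq> snd (p s)" using e(2) that by (auto simp: V_def)
      then show ?thesis using x that by blast
    qed simp
    then have "N x \<in> \<Inter>F" using p by blast
    then have "N x \<in> T \<inter> pontryagin_dual" using F(4) character by (auto simp: pontryagin_dual_def)
    then show "x \<in> K"
      using K homeomorphic_imp_injective_map[OF homeomorphic] by (auto dest: injD)
  qed (use e(1) in simp)
qed

lemma compact_perp_open_subgroup:
  assumes K: "add_subgroup K" "compact K" "open K"
  shows "compact (perp N K)"
proof -
  have "0 \<in> K" using K(1) by (simp add: add_subgroup_def)
  then obtain C e where C: "compact C" "e > 0" and small: "\<And>x. N x ` C \<subseteq> ball 1 e \<Longrightarrow> x \<in> K"
    using near_trivial_on_compact_imp_mem[OF K(3)] by blast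
  from subset_UN_translates[OF \<open>0 \<in> K\<close>] obtain P where P: "P \<subseteq> C" "finite P" "C \<subseteq> (\<Union>c\<in>P. (+) c ` K)"
    by (rule compactE_image[OF C(1) open_translation_group[OF K(3)]]) blast
  obtain R where R: "finite R" "R \<subseteq> perp N K"
    and net: "\<And>x. x \<in> perp N K \<Longrightarrow> \<exists>y\<in>R. \<forall>c\<in>P. dist (N x c) (N y c) < e"
  proof (rule finite_net_pointwise[OF P(2) compact_sphere C(2), where S = "perp N K" and f = N])
    show "N x c \<in> sphere 0 1" for x c by (simp add: norm_eq_1)
  qed (use that in blast)
  have "perp N K \<subseteq> (\<Union>y\<in>R. (+) y ` K)"
  proof
    fix x assume x: "x \<in> perp N K"
    then obtain y where y: "y \<in> R" "\<forall>c\<in>P. dist (N x c) (N y c) < e" using net by blast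
    have "y \<in> perp N K" using y(1) R(2) by blast
    then have xy: "x - y \<in> perp N K"
      using x add_subgroup_perp[of K] unfolding diff_conv_add_uminus add_subgroup_def by blast
    have "N (x - y) q \<in> ball 1 e" if "q \<in> C" for q
    proof -
      obtain c k where ck: "c \<in> P" "k \<in> K" "q = c + k" using P(3) \<open>q \<in> C\<close> by blast
      have "N (x - y) q = N (x - y) c"
        using xy ck character[of "x - y"] by (simp add: perp_def character_def)
      moreover have "N (x - y) c * N y c = N x c" by (simp flip: add_left)
      ultimately show ?thesis
        using bspec[OF y(2) ck(1)] dist_unimodular_mult[OF norm_eq_1, of "N (x - y) c" y c]
        by (simp add: dist_commute)
    qed
    then have "x - y \<in> K" using small by blast
    then have "x \<in> (+) y ` K" by (rule image_eqI[rotated]) simp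
    then show "x \<in> (\<Union>y\<in>R. (+) y ` K)" using y(1) by blast
  qed
  moreover have "compact ((+) y ` K)" for y
    by (rule compact_continuous_image[OF continuous_on_add[OF continuous_on_const continuous_on_id] K(2)])
  then have "compact ((\<Union>y\<in>R. (+) y ` K) \<inter> perp N K)"
    using R(1) by (intro compact_Int_closed closed_perp compact_UN)
  ultimately show ?thesis by (simp add: Int_absorb1)
qed

lemma isotropic_imp_self_perp_superset:
  assumes "isotropic N K"
  shows "\<exists>M. K \<subseteq> M \<and> perp N M = M"
proof -
  define \<A> where "\<A> = {S. isotropic N S \<and> K \<subseteq> S}"
  have "\<Union>\<C> \<in> \<A>" if "\<C> \<noteq> {}" "subset.chain \<A> \<C>" for \<C>
  proof -
    have chain: "\<C> \<subseteq> \<A>" "\<And>X Y. X \<in> \<C> \<Longrightarrow> Y \<in> \<C> \<Longrightarrow> X \<subseteq> Y \<or> Y \<subseteq> X"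
      using that(2) by (auto simp: subset_chain_def)
    have "N a b = 1" if ab: "a \<in> X" "b \<in> Y" "X \<in> \<C>" "Y \<in> \<C>" for a b X Y
    proof -
      obtain Z where "Z \<in> \<C>" "a \<in> Z" "b \<in> Z" using chain(2)[of X Y] ab by blast
      then show ?thesis using chain(1) by (auto simp: \<A>_def isotropic_def perp_def)
    qed
    then have "isotropic N (\<Union>\<C>)" by (auto simp: isotropic_def perp_def)
    moreover have "K \<subseteq> \<Union>\<C>" using that(1) chain(1) by (auto simp: \<A>_def)
    ultimately show ?thesis by (simp add: \<A>_def)
  qed
  moreover have "K \<in> \<A>" using assms by (simp add: \<A>_def)
  ultimately obtain M where M: "M \<in> \<A>" and max: "\<forall>X\<in>\<A>. M \<subseteq> X \<longrightarrow> X = M"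
    using subset_Zorn_nonempty[of \<A>] by blast
  have "perp N M \<subseteq> M"
  proof
    fix x assume x: "x \<in> perp N M"
    then have "isotropic N (insert x M)"
      using M alternating swap[of _ x] by (auto simp: \<A>_def isotropic_def perp_def)
    then show "x \<in> M" using max M by (auto simp: \<A>_def)
  qed
  then show ?thesis using M by (auto simp: \<A>_def isotropic_def)
qed

end

theorem lemma7p3:
  fixes nabla :: "'a::{topological_group_add, ab_group_add, t2_space} \<Rightarrow> 'a \<Rightarrow> complex"
  assumes "locally_compact_space (euclidean :: 'a topology)"
    and "symplectic_self_duality nabla"
    and "\<exists>H::'a set. add_subgroup H \<and> compact H \<and> open H"
  shows "\<exists>G::'a set. add_subgroup G \<and> compact G \<and> open G
           \<and> G = {x. \<forall>g\<in>G. nabla x g = 1}"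
proof -
  interpret symplectic_self_dual nabla by (rule symplectic_self_dual.intro) (rule assms(2))
  obtain H :: "'a set" where H: "add_subgroup H" "compact H" "open H" using assms(3) by blast
  define K where "K = H \<inter> perp nabla H"
  have K: "add_subgroup K" "compact K" "open K" "isotropic nabla K"
  proof -
    show "add_subgroup K"
      using H(1) add_subgroup_perp[of H] unfolding K_def add_subgroup_def by blast
    show "compact K" unfolding K_def using H(2) closed_perp by (rule compact_Int_closed)
    show "open K" unfolding K_def using H(3) open_perp_compact_subgroup[OF H(1,2)] by (rule open_Int)
    show "isotropic nabla K" by (auto simp: K_def isotropic_def perp_def)
  qed
  obtain M where M: "K \<subseteq> M" "perp nabla M = M"
    using isotropic_imp_self_perp_superset[OF K(4)] by blast
  have "add_subgroup M" using add_subgroup_perp[of M] M(2) by simp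
  moreover have "open M"
    using open_add_subgroup_if_superset_of_nbhd[OF \<open>add_subgroup M\<close> K(3) _ M(1)] K(1)
    by (simp add: add_subgroup_def)
  moreover have "compact M"
  proof -
    have "M \<subseteq> perp nabla K" using M by (auto simp: perp_def)
    then show ?thesis
      using compact_Int_closed[OF compact_perp_open_subgroup[OF K(1-3)] closed_perp, of M] M(2)
      by (simp add: Int_absorb1)
  qed
  ultimately show ?thesis using M(2) by (auto simp: perp_def)
qed

end
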